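(* Let $G$ be a groupoid that is a generalised inflation of its subgroupoid $U$, and suppose that $G$ is a right modular groupoid and that $U$ is right cancellative (i.e. for $a,b,c \in U$, $ac = bc$ implies $a = b$). Then $G$ is an inflation of $U$.
   Context: A groupoid is a set with a binary operation, written $xy$ or $x\cdot y$. A groupoid $G$ is right modular if $xy\cdot z = zy\cdot x$ for all $x,y,z \in G$. A groupoid $G$ is an inflation of its subgroupoid $U$ if $G = \bigcup_{u\in U} G_u$ where (1) $u \in G_u$ for all $u\in U$, (2) $G_u \cap G_v = \emptyset$ for $u \ne v$, and (3) $x \in G_u$, $y\in G_v$ implies $xy = uv$. A groupoid $G$ is a generalised inflation of its subgroupoid $U$ if $G = \bigcup_{u\in U} G_u$ where (1) $u \in G_u$ for all $u \in U$, (2) $G_u\cap G_v=\emptyset$ for $u\neq v$, (3) for every $x \in G$ there are maps $\alpha_x, \beta_x : U \to U$ such that for all $x \in G_u$ and $y \in G_v$ ($u,v\in U$) one has $xy = \alpha_x(v)\cdot \beta_y(u)$ (product computed in $U$), and (4) for $u \in U$, $\alpha_u$ and $\beta_u$ are both the constant map on $U$ with value $u$. *)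

theory Defs
  imports Main
begin

definition groupoid :: "'a set \<Rightarrow> ('a \<Rightarrow> 'a \<Rightarrow> 'a) \<Rightarrow> bool" where
  "groupoid S m \<longleftrightarrow> (\<forall>x\<in>S. \<forall>y\<in>S. m x y \<in> S)"

definition subgroupoid :: "'a set \<Rightarrow> 'a set \<Rightarrow> ('a \<Rightarrow> 'a \<Rightarrow> 'a) \<Rightarrow> bool" where
  "subgroupoid U G m \<longleftrightarrow> U \<subseteq> G \<and> (\<forall>x\<in>U. \<forall>y\<in>U. m x y \<in> U)"

definition right_modular :: "'a set \<Rightarrow> ('a \<Rightarrow> 'a \<Rightarrow> 'a) \<Rightarrow> bool" where
  "right_modular G m \<longleftrightarrow> (\<forall>x\<in>G. \<forall>y\<in>G. \<forall>z\<in>G. m (m x y) z = m (m z y) x)"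

definition right_cancellative :: "'a set \<Rightarrow> ('a \<Rightarrow> 'a \<Rightarrow> 'a) \<Rightarrow> bool" where
  "right_cancellative U m \<longleftrightarrow> (\<forall>a\<in>U. \<forall>b\<in>U. \<forall>c\<in>U. m a c = m b c \<longrightarrow> a = b)"

definition block_decomp :: "'a set \<Rightarrow> 'a set \<Rightarrow> ('a \<Rightarrow> 'a set) \<Rightarrow> bool" where
  "block_decomp G U B \<longleftrightarrow>
     G = (\<Union>u\<in>U. B u) \<and> (\<forall>u\<in>U. u \<in> B u) \<and>
     (\<forall>u\<in>U. \<forall>v\<in>U. u \<noteq> v \<longrightarrow> B u \<inter> B v = {})"

definition inflation :: "'a set \<Rightarrow> ('a \<Rightarrow> 'a \<Rightarrow> 'a) \<Rightarrow> 'a set \<Rightarrow> bool" where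
  "inflation G m U \<longleftrightarrow> subgroupoid U G m \<and>
     (\<exists>B. block_decomp G U B \<and>
        (\<forall>u\<in>U. \<forall>v\<in>U. \<forall>x\<in>B u. \<forall>y\<in>B v. m x y = m u v))"

definition generalised_inflation :: "'a set \<Rightarrow> ('a \<Rightarrow> 'a \<Rightarrow> 'a) \<Rightarrow> 'a set \<Rightarrow> bool" where
  "generalised_inflation G m U \<longleftrightarrow> subgroupoid U G m \<and>
     (\<exists>B (\<alpha> :: 'a \<Rightarrow> 'a \<Rightarrow> 'a) (\<beta> :: 'a \<Rightarrow> 'a \<Rightarrow> 'a).
        block_decomp G U B \<and>
        (\<forall>x\<in>G. \<forall>w\<in>U. \<alpha> x w \<in> U \<and> \<beta> x w \<in> U) \<and>
        (\<forall>u\<in>U. \<forall>v\<in>U. \<forall>x\<in>B u. \<forall>y\<in>B v. m x y = m (\<alpha> x v) (\<beta> y u)) \<and>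
        (\<forall>u\<in>U. \<forall>w\<in>U. \<alpha> u w = u \<and> \<beta> u w = u))"

end

theory Submission
  imports Defs
begin

text \<open>In a generalised inflation \<open>dx = d \<beta>\<^sub>x(d)\<close> for \<open>d \<in> U\<close>. Right modularity and right
  cancellation in \<open>U\<close> show that \<open>d \<beta>\<^sub>x(d) = d \<beta>\<^sub>x(u)\<close> for a fixed \<open>u\<close>, so the element
  \<open>\<beta>\<^sub>x(u)\<close> of \<open>U\<close> multiplies \<open>U\<close> on both sides exactly as \<open>x\<close> does. This representative
  \<open>r(x)\<close> is unique, right modularity gives \<open>xy = r(x) r(y)\<close>, and the fibres of \<open>r\<close> are the
  blocks of an inflation.\<close>

definition represents :: "'a set \<Rightarrow> ('a \<Rightarrow> 'a \<Rightarrow> 'a) \<Rightarrow> 'a \<Rightarrow> 'a \<Rightarrow> bool" where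
  "represents U m q x \<longleftrightarrow> (\<forall>d\<in>U. m d x = m d q \<and> m x d = m q d)"

lemma inflation_if_retraction:
  assumes "subgroupoid U G m"
    and "\<And>x. x \<in> G \<Longrightarrow> r x \<in> U"
    and "\<And>u. u \<in> U \<Longrightarrow> r u = u"
    and "\<And>x y. x \<in> G \<Longrightarrow> y \<in> G \<Longrightarrow> m x y = m (r x) (r y)"
  shows "inflation G m U"
proof -
  have "U \<subseteq> G" using assms(1) by (simp add: subgroupoid_def)
  then have "block_decomp G U (\<lambda>w. {x \<in> G. r x = w})"
    unfolding block_decomp_def using assms(2,3) by auto
  moreover have "m x y = m u v"
    if "u \<in> U" "v \<in> U" "x \<in> {x \<in> G. r x = u}" "y \<in> {y \<in> G. r y = v}" for u v x y
    using assms(4) that by simp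
  ultimately show ?thesis
    unfolding inflation_def using assms(1) by blast
qed

locale right_modular_cancellative =
  fixes G U :: "'a set" and m :: "'a \<Rightarrow> 'a \<Rightarrow> 'a"
  assumes modular: "right_modular G m"
    and cancellative: "right_cancellative U m"
    and subgroupoid: "subgroupoid U G m"
begin

lemma U_subset: "U \<subseteq> G"
  using subgroupoid by (simp add: subgroupoid_def)

lemma mult_closed: "a \<in> U \<Longrightarrow> b \<in> U \<Longrightarrow> m a b \<in> U"
  using subgroupoid by (simp add: subgroupoid_def)

lemma modular_law: "x \<in> G \<Longrightarrow> y \<in> G \<Longrightarrow> z \<in> G \<Longrightarrow> m (m x y) z = m (m z y) x"
  using modular by (simp add: right_modular_def)

lemma cancel: "a \<in> U \<Longrightarrow> b \<in> U \<Longrightarrow> c \<in> U \<Longrightarrow> m a c = m b c \<Longrightarrow> a = b"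
  using cancellative unfolding right_cancellative_def by blast

lemma right_action_if_left_action:
  assumes x: "x \<in> G" and q: "q \<in> U" and d: "d \<in> U"
    and left: "\<And>c. c \<in> U \<Longrightarrow> m c x = m c q"
    and xd: "m x d \<in> U"
  shows "m x d = m q d"
proof -
  have "d \<in> G" "q \<in> G" using d q U_subset by auto
  have "m (m x d) d = m (m d d) x" using modular_law[OF x \<open>d \<in> G\<close> \<open>d \<in> G\<close>] .
  also have "\<dots> = m (m d d) q" using left[OF mult_closed[OF d d]] .
  also have "\<dots> = m (m q d) d" using modular_law[OF \<open>q \<in> G\<close> \<open>d \<in> G\<close> \<open>d \<in> G\<close>] by simp
  finally show ?thesis using cancel[OF xd mult_closed[OF q d] d] by simp
qed

lemma represents_unique:
  assumes "q \<in> U" "q' \<in> U" "represents U m q x" "represents U m q' x"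
  shows "q = q'"
proof -
  have "m q q = m x q" and "m q' q = m x q"
    using assms(1,3,4) unfolding represents_def by auto
  then show ?thesis using cancel assms(1,2) by simp
qed

lemma represents_self: "u \<in> U \<Longrightarrow> represents U m u u"
  by (simp add: represents_def)

lemma mult_represented:
  assumes x: "x \<in> G" and y: "y \<in> G" and p: "p \<in> U" and q: "q \<in> U"
    and rx: "represents U m p x" and ry: "represents U m q y"
    and xy: "m x y \<in> U"
  shows "m x y = m p q"
proof -
  have "p \<in> G" using p U_subset by auto
  have "m (m x y) p = m (m p y) x" using modular_law[OF x y \<open>p \<in> G\<close>] .
  also have "\<dots> = m (m p q) x" using ry p by (simp add: represents_def)
  also have "\<dots> = m (m p q) p" using rx mult_closed[OF p q] by (simp add: represents_def)
  finally show ?thesis using cancel[OF xy mult_closed[OF p q] p] by simp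
qed

text \<open>The hypothesis on \<open>\<beta>\<close> is what a generalised inflation provides for \<open>x\<close>, namely
  \<open>dx = d \<beta>\<^sub>x(d)\<close>; the point is that \<open>d \<beta>\<^sub>x(d)\<close> does not depend on the argument of \<open>\<beta>\<^sub>x\<close>.\<close>

lemma representative_exists:
  assumes x: "x \<in> G" and u: "u \<in> U"
    and \<beta>: "\<And>d. d \<in> U \<Longrightarrow> \<beta> d \<in> U"
    and left: "\<And>d. d \<in> U \<Longrightarrow> m d x = m d (\<beta> d)"
    and right_closed: "\<And>d. d \<in> U \<Longrightarrow> m x d \<in> U"
  shows "\<exists>q\<in>U. represents U m q x"
proof -
  have independent: "m c (\<beta> c) = m c (\<beta> d)" if c: "c \<in> U" and d: "d \<in> U" for c d
  proof -
    have "c \<in> G" "d \<in> G" "\<beta> d \<in> G" using c d \<beta> U_subset by auto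
    have "m (m c (\<beta> c)) d = m (m c x) d" using left[OF c] by simp
    also have "\<dots> = m (m d x) c" using modular_law[OF \<open>c \<in> G\<close> x \<open>d \<in> G\<close>] .
    also have "\<dots> = m (m d (\<beta> d)) c" using left[OF d] by simp
    also have "\<dots> = m (m c (\<beta> d)) d"
      using modular_law[OF \<open>d \<in> G\<close> \<open>\<beta> d \<in> G\<close> \<open>c \<in> G\<close>] .
    finally show ?thesis
      using cancel mult_closed c d \<beta> by meson
  qed
  have left_u: "m c x = m c (\<beta> u)" if c: "c \<in> U" for c
    using left[OF c] independent[OF c u] by simp
  have "represents U m (\<beta> u) x"
    unfolding represents_def
    using left_u right_action_if_left_action[OF x \<beta>[OF u] _ left_u right_closed] by blast
  then show ?thesis using \<beta>[OF u] by blast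
qed

end

lemma generalised_inflation_mult_closed:
  assumes "generalised_inflation G m U" "x \<in> G" "y \<in> G"
  shows "m x y \<in> U"
proof -
  obtain B \<alpha> \<beta> where B: "block_decomp G U B"
    and \<alpha>\<beta>: "\<forall>x\<in>G. \<forall>w\<in>U. \<alpha> x w \<in> U \<and> \<beta> x w \<in> U"
    and mult: "\<forall>u\<in>U. \<forall>v\<in>U. \<forall>x\<in>B u. \<forall>y\<in>B v. m x y = m (\<alpha> x v) (\<beta> y u)"
    and sub: "subgroupoid U G m"
    using assms(1) unfolding generalised_inflation_def by blast
  obtain u v where u: "u \<in> U" "x \<in> B u" and v: "v \<in> U" "y \<in> B v"
    using B assms(2,3) unfolding block_decomp_def by blast
  then have "m x y = m (\<alpha> x v) (\<beta> y u)" using mult by blast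
  moreover have "\<alpha> x v \<in> U" "\<beta> y u \<in> U" using \<alpha>\<beta> assms(2,3) u v by auto
  ultimately show ?thesis using sub unfolding subgroupoid_def by simp
qed

lemma generalised_inflation_left_mult:
  assumes "generalised_inflation G m U" "x \<in> G"
  obtains u \<beta> where "u \<in> U" "\<And>d. d \<in> U \<Longrightarrow> \<beta> d \<in> U"
    "\<And>d. d \<in> U \<Longrightarrow> m d x = m d (\<beta> d)"
proof -
  obtain B \<alpha> \<beta> where B: "block_decomp G U B"
    and \<alpha>\<beta>: "\<forall>x\<in>G. \<forall>w\<in>U. \<alpha> x w \<in> U \<and> \<beta> x w \<in> U"
    and mult: "\<forall>u\<in>U. \<forall>v\<in>U. \<forall>x\<in>B u. \<forall>y\<in>B v. m x y = m (\<alpha> x v) (\<beta> y u)"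
    and const: "\<forall>u\<in>U. \<forall>w\<in>U. \<alpha> u w = u \<and> \<beta> u w = u"
    using assms(1) unfolding generalised_inflation_def by blast
  obtain u where u: "u \<in> U" "x \<in> B u"
    using B assms(2) unfolding block_decomp_def by blast
  have "m d x = m d (\<beta> x d)" if d: "d \<in> U" for d
  proof -
    have "d \<in> B d" using B d unfolding block_decomp_def by blast
    then have "m d x = m (\<alpha> d u) (\<beta> x d)" using mult u d by blast
    then show ?thesis using const u d by simp
  qed
  moreover have "\<beta> x d \<in> U" if "d \<in> U" for d
    using \<alpha>\<beta> assms(2) that by blast
  ultimately show ?thesis using that u(1) by blast
qed

theorem theorem1:
  fixes G U :: "'a set" and m :: "'a \<Rightarrow> 'a \<Rightarrow> 'a"
  assumes "groupoid G m"
    and "generalised_inflation G m U"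
    and "right_modular G m"
    and "right_cancellative U m"
  shows "inflation G m U"
proof -
  have sub: "subgroupoid U G m"
    using assms(2) by (simp add: generalised_inflation_def)
  interpret right_modular_cancellative G U m
    using assms(3,4) sub by unfold_locales
  have closed: "m x y \<in> U" if "x \<in> G" "y \<in> G" for x y
    using generalised_inflation_mult_closed[OF assms(2) that] .
  have "\<exists>q\<in>U. represents U m q x" if x: "x \<in> G" for x
  proof -
    obtain u \<beta> where "u \<in> U" "\<And>d. d \<in> U \<Longrightarrow> \<beta> d \<in> U"
      "\<And>d. d \<in> U \<Longrightarrow> m d x = m d (\<beta> d)"
      using generalised_inflation_left_mult[OF assms(2) x] by blast
    then show ?thesis
      using representative_exists[OF x] closed[OF x] U_subset by blast
  qed
  then obtain r where r: "\<And>x. x \<in> G \<Longrightarrow> r x \<in> U" "\<And>x. x \<in> G \<Longrightarrow> represents U m (r x) x"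
    by metis
  show ?thesis
  proof (rule inflation_if_retraction[OF sub r(1)])
    fix u assume u: "u \<in> U"
    then have "u \<in> G" using U_subset by auto
    then show "r u = u"
      using represents_unique[OF r(1) u r(2) represents_self[OF u]] by simp
  next
    fix x y assume "x \<in> G" "y \<in> G"
    then show "m x y = m (r x) (r y)"
      using mult_represented[OF _ _ r(1) r(1) r(2) r(2) closed] by simp
  qed
qed

end
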